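(* Let $P$ be a convex polygon, let $\mathcal{R}$ be the smallest axis-parallel rectangle containing $P$, with side lengths $L\ge W>0$, and let $r=\frac14\sqrt{L^2+4W^2}$. Suppose that $P$ has four distinct vertices lying respectively on the four different sides of $\mathcal{R}$ and forming a (nondegenerate) quadrilateral. Then $r\le 2\,r_{opt}(P)$.
   Context: For a compact set $X\subset\mathbb{R}^2$, $r_{opt}(X)$ denotes the minimum $r$ such that two closed disks of radius $r$ have union containing $X$. The number $r$ is the radius of the two congruent disks circumscribing the two halves $\frac L2\times W$ of $\mathcal{R}$ obtained by splitting it through its longer sides' midpoints. *)

theory Defs
  imports "HOL-Analysis.Analysis"
begin

text \<open>Points of the plane are pairs of reals; the product metric is Euclidean.\<close>

definition r_opt :: "(real \<times> real) set \<Rightarrow> real" where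
  "r_opt X = Inf {r. \<exists>c1 c2. X \<subseteq> cball c1 r \<union> cball c2 r}"

definition convex_polygon :: "(real \<times> real) set \<Rightarrow> bool" where
  "convex_polygon P \<longleftrightarrow> (\<exists>V. finite V \<and> P = convex hull V) \<and> interior P \<noteq> {}"

definition vertex_of :: "(real \<times> real) \<Rightarrow> (real \<times> real) set \<Rightarrow> bool" where
  "vertex_of v P \<longleftrightarrow> v extreme_point_of P"

text \<open>The smallest axis-parallel rectangle containing P is
  [xmin P, xmax P] \<times> [ymin P, ymax P].\<close>
definition xmin :: "(real \<times> real) set \<Rightarrow> real" where "xmin P = Inf (fst ` P)"
definition xmax :: "(real \<times> real) set \<Rightarrow> real" where "xmax P = Sup (fst ` P)"
definition ymin :: "(real \<times> real) set \<Rightarrow> real" where "ymin P = Inf (snd ` P)"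
definition ymax :: "(real \<times> real) set \<Rightarrow> real" where "ymax P = Sup (snd ` P)"

end

theory Submission
  imports Defs
begin

text \<open>
  Let \<open>X\<close>, \<open>Y\<close> be the side lengths of the bounding rectangle and \<open>D = \<surd>(L\<^sup>2 + 4W\<^sup>2)/4\<close>.
  Every point \<open>e\<close> on the boundary of the quadrilateral \<open>abcd\<close> is at distance at least \<open>D\<close>
  from one of its vertices: for \<open>e\<close> on \<open>bc\<close> at parameter \<open>t\<close>, the distances to \<open>b\<close> and \<open>c\<close>
  are \<open>t |bc|\<close> and \<open>(1 - t) |bc|\<close>, while those to \<open>a\<close> and \<open>d\<close> are at least the horizontal and
  vertical gaps to the opposite sides of the rectangle; if all four were below \<open>D\<close>, then
  \<open>D < min X Y\<close> and \<open>(X - D)\<^sup>2 + (Y - D)\<^sup>2 < D\<^sup>2\<close>, which an elementary inequality for \<open>D\<close> forbids.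
  The other edges reduce to \<open>bc\<close> by reflecting the plane.

  Now cover \<open>P\<close> by two disks of radius \<open>\<rho>\<close>. If one disk contains the (connected) boundary of
  \<open>abcd\<close>, it contains \<open>a, c\<close> and \<open>b, d\<close>, so \<open>2\<rho> \<ge> max X Y \<ge> D\<close>. Otherwise some boundary
  point \<open>e\<close> lies in both disks, and a vertex far from \<open>e\<close> lies in one of them, so \<open>D \<le> 2\<rho>\<close>.
\<close>

text \<open>The circumradius of either half of the \<open>X \<times> Y\<close> rectangle cut through the midpoints of
  its longer sides.\<close>

definition half_rect_circumradius :: "real \<Rightarrow> real \<Rightarrow> real" where
  "half_rect_circumradius X Y = sqrt ((max X Y)^2 + 4 * (min X Y)^2) / 4"

lemma half_rect_circumradius_sq:
  "16 * (half_rect_circumradius X Y)^2 = (max X Y)^2 + 4 * (min X Y)^2"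
  by (simp add: half_rect_circumradius_def power_divide)

lemma half_rect_circumradius_le_max:
  assumes "0 \<le> X" "0 \<le> Y"
  shows "half_rect_circumradius X Y \<le> max X Y"
proof -
  have "(min X Y)^2 \<le> (max X Y)^2"
    using assms by (intro power_mono) auto
  moreover have "(4 * max X Y)^2 = 16 * (max X Y)^2" by simp
  ultimately have "(max X Y)^2 + 4 * (min X Y)^2 \<le> (4 * max X Y)^2"
    using zero_le_power2[of "max X Y"] by linarith
  hence "sqrt ((max X Y)^2 + 4 * (min X Y)^2) \<le> 4 * max X Y"
    using assms by (intro real_le_lsqrt) auto
  thus ?thesis unfolding half_rect_circumradius_def by simp
qed

lemma half_rect_circumradius_sq_le:
  assumes "0 \<le> X" "0 \<le> Y"
  shows "(half_rect_circumradius X Y)^2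
    \<le> (X - half_rect_circumradius X Y)^2 + (Y - half_rect_circumradius X Y)^2"
proof -
  define L W D where "L = max X Y" and "W = min X Y" and "D = half_rect_circumradius X Y"
  have D: "16 * D^2 = L^2 + 4 * W^2"
    unfolding L_def W_def D_def by (rule half_rect_circumradius_sq)
  have WL: "0 \<le> W" "W \<le> L" using assms unfolding L_def W_def by auto
  txt \<open>After bounding \<open>16 D\<close> by \<open>4 L + 5 W\<close> in the cross term \<open>2 D (L + W)\<close>, what
    remains of \<open>16 ((L - D)\<^sup>2 + (W - D)\<^sup>2 - D\<^sup>2)\<close> is \<open>9 (L - W)\<^sup>2 + W\<^sup>2\<close>.\<close>
  have "W * W \<le> L * W" using WL by (intro mult_right_mono)
  moreover have "(4 * L + 5 * W)^2 - (16 * D)^2 = 40 * (L * W) - 39 * (W * W)"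
    using D by (simp add: power2_eq_square algebra_simps)
  ultimately have "(16 * D)^2 \<le> (4 * L + 5 * W)^2"
    using zero_le_square[of W] by linarith
  hence "16 * D \<le> 4 * L + 5 * W"
    by (rule power2_le_imp_le) (use WL in auto)
  hence "16 * D * (L + W) \<le> (4 * L + 5 * W) * (L + W)"
    using WL by (intro mult_right_mono) auto
  hence "0 \<le> 9 * (L - W)^2 + W^2 + 2 * ((4 * L + 5 * W) * (L + W) - 16 * D * (L + W))"
    by (intro add_nonneg_nonneg mult_nonneg_nonneg) auto
  also have "\<dots> = 16 * ((L - D)^2 + (W - D)^2 - D^2)"
    using D by (simp add: power2_eq_square algebra_simps)
  finally have "D^2 \<le> (L - D)^2 + (W - D)^2" by simp
  moreover have "(L - D)^2 + (W - D)^2 = (X - D)^2 + (Y - D)^2"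
    unfolding L_def W_def by (cases "X \<le> Y") (auto simp: max_def min_def)
  ultimately show ?thesis unfolding D_def by simp
qed

text \<open>For a point at parameter \<open>t\<close> on a segment \<open>bc\<close> of length \<open>s\<close>, with horizontal and
  vertical increments \<open>p\<close> and \<open>q\<close>: \<open>dB\<close>, \<open>dC\<close> are its distances to \<open>b\<close>, \<open>c\<close>, and \<open>dA\<close>, \<open>dD\<close>
  dominate its gaps to the sides of the rectangle opposite \<open>c\<close> and \<open>b\<close>.\<close>
lemma half_rect_circumradius_le_edge_point_bound:
  fixes X Y t p q s dA dB dC dD :: real
  assumes t: "0 \<le> t" "t \<le> 1" and XY: "0 < X" "0 < Y" and s: "p^2 + q^2 \<le> s^2" "0 \<le> s"
    and dA: "X - (1 - t) * p \<le> dA" and dD: "Y - t * q \<le> dD"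
    and dB: "dB = t * s" and dC: "dC = (1 - t) * s"
  shows "half_rect_circumradius X Y \<le> max (max dA dB) (max dC dD)"
proof (rule ccontr)
  define D where "D = half_rect_circumradius X Y"
  assume "\<not> ?thesis"
  hence lt: "dA < D" "dB < D" "dC < D" "dD < D" unfolding D_def by auto
  have "p^2 \<le> s^2" "q^2 \<le> s^2"
    using s(1) zero_le_power2[of p] zero_le_power2[of q] by linarith+
  hence ps: "p \<le> s" and qs: "q \<le> s" using s(2) by (auto intro!: power2_le_imp_le)
  have "(1 - t) * p \<le> dC" "t * q \<le> dB"
    using ps qs t unfolding dB dC by (auto intro: mult_left_mono)
  hence "max X Y < 2 * D" using dA dD lt by auto
  hence "(max X Y)^2 < (2 * D)^2" using XY by (intro power_strict_mono) auto
  moreover have "(2 * D)^2 = 4 * D^2" by simp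
  ultimately have "(min X Y)^2 > D^2"
    using half_rect_circumradius_sq[of X Y] zero_le_power2[of D] unfolding D_def by linarith
  hence "D < min X Y" by (rule power_less_imp_less_base) (use XY in simp)
  hence "0 \<le> X - D" "X - D < (1 - t) * p" "0 \<le> Y - D" "Y - D < t * q" using dA dD lt by auto
  hence "(X - D)^2 + (Y - D)^2 < ((1 - t) * p)^2 + (t * q)^2"
    by (intro add_strict_mono power_strict_mono) auto
  also have "\<dots> \<le> (max t (1 - t))^2 * (p^2 + q^2)"
  proof -
    have "(1 - t)^2 \<le> (max t (1 - t))^2" "t^2 \<le> (max t (1 - t))^2"
      using t by (auto intro: power_mono)
    thus ?thesis
      by (simp add: power_mult_distrib distrib_left add_mono mult_right_mono)
  qed
  also have "\<dots> \<le> (max t (1 - t) * s)^2"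
    using s(1) by (simp add: power_mult_distrib mult_left_mono)
  also have "\<dots> < D^2"
    using lt t s(2) unfolding dB dC
    by (intro power_strict_mono) (auto simp: max_mult_distrib_right le_max_iff_disj)
  finally have "(X - D)^2 + (Y - D)^2 < D^2" .
  moreover have "D^2 \<le> (X - D)^2 + (Y - D)^2"
    unfolding D_def using XY by (intro half_rect_circumradius_sq_le) auto
  ultimately show False by linarith
qed

lemma fst_diff_le_dist: "fst x - fst y \<le> dist x (y :: real \<times> 'a::metric_space)"
  using dist_fst_le[of x y] by (simp add: dist_real_def)

lemma snd_diff_le_dist: "snd x - snd y \<le> dist x (y :: 'a::metric_space \<times> real)"
  using dist_snd_le[of x y] by (simp add: dist_real_def)

lemma dist_convex_combination:
  fixes b c :: "'a::real_normed_vector"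
  assumes "0 \<le> t" "t \<le> 1"
  shows "dist ((1 - t) *\<^sub>R b + t *\<^sub>R c) b = t * dist b c"
    and "dist ((1 - t) *\<^sub>R b + t *\<^sub>R c) c = (1 - t) * dist b c"
proof -
  have "(1 - t) *\<^sub>R b + t *\<^sub>R c - b = t *\<^sub>R (c - b)"
    "(1 - t) *\<^sub>R b + t *\<^sub>R c - c = (1 - t) *\<^sub>R (b - c)"
    by (simp_all add: algebra_simps)
  thus "dist ((1 - t) *\<^sub>R b + t *\<^sub>R c) b = t * dist b c"
    "dist ((1 - t) *\<^sub>R b + t *\<^sub>R c) c = (1 - t) * dist b c"
    using assms by (simp_all add: dist_norm norm_minus_commute)
qed

lemma corner_edge_far_vertex:
  fixes a b c d e :: "real \<times> real"
  assumes X: "0 < fst c - fst a" and Y: "0 < snd d - snd b" and e: "e \<in> closed_segment b c"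
  shows "\<exists>v\<in>{a, b, c, d}. half_rect_circumradius (fst c - fst a) (snd d - snd b) \<le> dist e v"
proof -
  obtain t where t: "0 \<le> t" "t \<le> 1" and e_eq: "e = (1 - t) *\<^sub>R b + t *\<^sub>R c"
    using e by (auto simp: closed_segment_def)
  have "fst c - fst a - (1 - t) * (fst c - fst b) = fst e - fst a"
    "snd d - snd b - t * (snd c - snd b) = snd d - snd e"
    unfolding e_eq by (simp_all add: algebra_simps)
  hence "fst c - fst a - (1 - t) * (fst c - fst b) \<le> dist e a"
    "snd d - snd b - t * (snd c - snd b) \<le> dist e d"
    using fst_diff_le_dist[of e a] snd_diff_le_dist[of d e] by (simp_all add: dist_commute)
  moreover have "(fst c - fst b)^2 + (snd c - snd b)^2 \<le> (dist b c)^2"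
    by (simp add: dist_prod_def dist_real_def power2_commute)
  ultimately have "half_rect_circumradius (fst c - fst a) (snd d - snd b)
      \<le> max (max (dist e a) (dist e b)) (max (dist e c) (dist e d))"
    using t X Y dist_convex_combination[OF t, of b c]
    by (intro half_rect_circumradius_le_edge_point_bound) (auto simp: e_eq)
  thus ?thesis by (auto simp: le_max_iff_disj)
qed

lemma corner_quadrilateral_far_vertex:
  fixes a b c d e :: "real \<times> real"
  assumes X: "0 < fst c - fst a" and Y: "0 < snd d - snd b"
    and e: "e \<in> closed_segment a b \<union> closed_segment b c \<union> closed_segment c d \<union> closed_segment d a"
  shows "\<exists>v\<in>{a, b, c, d}. half_rect_circumradius (fst c - fst a) (snd d - snd b) \<le> dist e v"
proof -
  define flip_x :: "real \<times> real \<Rightarrow> real \<times> real" where "flip_x z = (- fst z, snd z)" for z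
  define flip_y :: "real \<times> real \<Rightarrow> real \<times> real" where "flip_y z = (fst z, - snd z)" for z
  have lin: "linear flip_x" "linear flip_y" "linear uminus"
    unfolding flip_x_def flip_y_def by (auto intro!: linearI)
  have iso: "dist (flip_x u) (flip_x v) = dist u v" "dist (flip_y u) (flip_y v) = dist u v"
    "dist (- u) (- v) = dist u v" for u v
    by (simp_all add: flip_x_def flip_y_def dist_prod_def dist_real_def dist_minus abs_minus_commute)
  have seg: "f e \<in> closed_segment (f u) (f w)"
    if "linear f" "e \<in> closed_segment u w \<or> e \<in> closed_segment w u" for f u w
    using that by (auto simp: closed_segment_linear_image closed_segment_commute[of w u])
  txt \<open>The reflections \<open>flip_x\<close>, \<open>flip_y\<close> and \<open>uminus\<close> move the edges \<open>ab\<close>, \<open>cd\<close> and \<open>da\<close>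
    into the position of \<open>bc\<close>, keeping the widths of the bounding rectangle.\<close>
  consider "e \<in> closed_segment a b" | "e \<in> closed_segment b c"
    | "e \<in> closed_segment c d" | "e \<in> closed_segment d a"
    using e by blast
  thus ?thesis
  proof cases
    case 1
    from corner_edge_far_vertex
        [where a = "flip_x c" and b = "flip_x b" and c = "flip_x a"
        and d = "flip_x d" and e = "flip_x e"]
    show ?thesis using X Y seg[of flip_x b a] lin 1 by (auto simp: iso) (auto simp: flip_x_def)
  next
    case 2
    thus ?thesis using X Y by (rule corner_edge_far_vertex[rotated 2])
  next
    case 3
    from corner_edge_far_vertex
        [where a = "flip_y a" and b = "flip_y d" and c = "flip_y c"
        and d = "flip_y b" and e = "flip_y e"]
    show ?thesis using X Y seg[of flip_y d c] lin 3 by (auto simp: iso) (auto simp: flip_y_def)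
  next
    case 4
    from corner_edge_far_vertex[where a = "- c" and b = "- d" and c = "- a" and d = "- b" and e = "- e"]
    show ?thesis using X Y seg[of uminus d a] lin 4 by (auto simp: iso)
  qed
qed

lemma connected_subset_two_cballs:
  fixes S :: "'a::metric_space set"
  assumes "connected S" and "S \<subseteq> cball c1 \<rho> \<union> cball c2 \<rho>"
  obtains "S \<subseteq> cball c1 \<rho>" | "S \<subseteq> cball c2 \<rho>"
    | e where "e \<in> S" "e \<in> cball c1 \<rho>" "e \<in> cball c2 \<rho>"
proof -
  have "\<not> (cball c1 \<rho> \<inter> cball c2 \<rho> \<inter> S = {} \<and> cball c1 \<rho> \<inter> S \<noteq> {} \<and> cball c2 \<rho> \<inter> S \<noteq> {})"
    using assms unfolding connected_closed by (metis closed_cball)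
  thus ?thesis using assms(2) that by blast
qed

lemma two_cball_cover_corner_quadrilateral:
  fixes a b c d :: "real \<times> real"
  assumes X: "0 < fst c - fst a" and Y: "0 < snd d - snd b"
    and cover: "closed_segment a b \<union> closed_segment b c \<union> closed_segment c d \<union> closed_segment d a
      \<subseteq> cball c1 \<rho> \<union> cball c2 \<rho>"
  shows "half_rect_circumradius (fst c - fst a) (snd d - snd b) \<le> 2 * \<rho>"
proof -
  define Q where
    "Q = closed_segment a b \<union> closed_segment b c \<union> closed_segment c d \<union> closed_segment d a"
  have "connected Q"
    unfolding Q_def by (intro connected_Un) auto
  have vertices: "a \<in> Q" "b \<in> Q" "c \<in> Q" "d \<in> Q"
    unfolding Q_def by auto
  have diam: "dist x y \<le> 2 * \<rho>" if "x \<in> cball z \<rho>" "y \<in> cball z \<rho>" for x y z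
    using that dist_triangle[of x y z] by (simp add: dist_commute)
  have one_ball: "half_rect_circumradius (fst c - fst a) (snd d - snd b) \<le> 2 * \<rho>"
    if "Q \<subseteq> cball z \<rho>" for z
  proof -
    have "dist c a \<le> 2 * \<rho>" "dist d b \<le> 2 * \<rho>"
      using vertices that by (intro diam; blast)+
    hence "fst c - fst a \<le> 2 * \<rho>" "snd d - snd b \<le> 2 * \<rho>"
      using fst_diff_le_dist[of c a] snd_diff_le_dist[of d b] by linarith+
    thus ?thesis
      using half_rect_circumradius_le_max[of "fst c - fst a" "snd d - snd b"] X Y by linarith
  qed
  from \<open>connected Q\<close> cover[folded Q_def] show ?thesis
  proof (cases rule: connected_subset_two_cballs)
    case (3 e)
    then obtain v where "v \<in> {a, b, c, d}"
      and "half_rect_circumradius (fst c - fst a) (snd d - snd b) \<le> dist e v"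
      using corner_quadrilateral_far_vertex[OF X Y] unfolding Q_def by blast
    moreover have "v \<in> cball c1 \<rho> \<union> cball c2 \<rho>"
      using \<open>v \<in> {a, b, c, d}\<close> vertices cover[folded Q_def] by blast
    ultimately show ?thesis using 3 diam by fastforce
  qed (use one_ball in blast)+
qed

lemma r_opt_lower_bound:
  assumes "bounded S" and "\<And>c1 c2 \<rho>. S \<subseteq> cball c1 \<rho> \<union> cball c2 \<rho> \<Longrightarrow> r \<le> \<rho>"
  shows "r \<le> r_opt S"
proof -
  obtain R z where "S \<subseteq> cball z R" using assms(1) bounded_subset_cball by blast
  hence "{\<rho>. \<exists>c1 c2. S \<subseteq> cball c1 \<rho> \<union> cball c2 \<rho>} \<noteq> {}" by blast
  thus ?thesis unfolding r_opt_def using assms(2) by (auto intro: cInf_greatest)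
qed

theorem lemma1:
  fixes P :: "(real \<times> real) set" and a b c d :: "real \<times> real" and L W :: real
  assumes "convex_polygon P"
    and "L = max (xmax P - xmin P) (ymax P - ymin P)"
    and "W = min (xmax P - xmin P) (ymax P - ymin P)"
    and "W > 0"
    and "vertex_of a P" and "vertex_of b P" and "vertex_of c P" and "vertex_of d P"
    and "distinct [a, b, c, d]"
    and "fst a = xmin P" and "snd b = ymin P" and "fst c = xmax P" and "snd d = ymax P"
    and "interior (convex hull {a, b, c, d}) \<noteq> {}"
  shows "(1/4) * sqrt (L^2 + 4 * W^2) \<le> 2 * r_opt P"
proof -
  obtain V where "finite V" "P = convex hull V"
    using assms(1) unfolding convex_polygon_def by blast
  hence "bounded P" "convex P"
    by (simp_all add: compact_imp_bounded compact_convex_hull finite_imp_compact)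
  have "a \<in> P" "b \<in> P" "c \<in> P" "d \<in> P"
    using assms(5-8) unfolding vertex_of_def extreme_point_of_def by auto
  hence edges:
    "closed_segment a b \<union> closed_segment b c \<union> closed_segment c d \<union> closed_segment d a \<subseteq> P"
    using \<open>convex P\<close> by (auto dest: closed_segment_subset)
  have X: "0 < fst c - fst a" and Y: "0 < snd d - snd b"
    using assms(3,4,10-13) by auto
  have radius:
    "(1/4) * sqrt (L^2 + 4 * W^2) = half_rect_circumradius (fst c - fst a) (snd d - snd b)"
    using assms(2,3,10-13) by (simp add: half_rect_circumradius_def)
  have "half_rect_circumradius (fst c - fst a) (snd d - snd b) / 2 \<le> r_opt P"
  proof (rule r_opt_lower_bound[OF \<open>bounded P\<close>])
    fix c1 c2 \<rho> assume "P \<subseteq> cball c1 \<rho> \<union> cball c2 \<rho>"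
    with edges have "half_rect_circumradius (fst c - fst a) (snd d - snd b) \<le> 2 * \<rho>"
      by (intro two_cball_cover_corner_quadrilateral[OF X Y]) blast
    thus "half_rect_circumradius (fst c - fst a) (snd d - snd b) / 2 \<le> \<rho>" by simp
  qed
  thus ?thesis unfolding radius by simp
qed

end
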